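(* Let $F:\mathbb{R}^n\to\mathbb{R}^n$ be locally Lipschitz, $X^*=\{x:F(x)=0\}$, $x^*\in X^*$, $\mathcal{M}$ a smooth embedded submanifold of $\mathbb{R}^n$ containing $x^*$, and $\tilde X^*=X^*\cap\mathcal{M}$. Assume (A1), (A2), (A3) below, and let $b$ be as defined below. Let $q\in(1,2]$, $L_3>0$. For $x_k\in\mathcal{M}$ let $\mu_k=\|F(x_k)\|$, $J_k\in\partial_BF(x_k)$, $P_k=P(x_k)$, and let $d_k$ satisfy $(J_kP_k+\mu_kI)d_k=-F(x_k)+r_k$ where $\|r_k\|/\mu_k\le L_3\|F(x_k)\|^q$. Then there is a constant $c_1>0$ such that whenever $x_k\in\mathcal{M}\cap\bar B(x^*,b/2)$, $$\|d_k\|\le c_1\,\mathrm{dist}(x_k,\tilde X^* )+\mu_k^{-1}\|r_k\|.$$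
   Context: $\partial_BF(x)=\{\lim_kJ(x^k):x^k\to x, F \text{ differentiable at } x^k\}$ (B-Jacobian). $P(x)$ is the matrix of the orthogonal projection onto the tangent space $T_x\mathcal{M}$. (A1): there are $b_1>0$, $L_2>0$ such that $F$ is $L_2$-Lipschitz on $\bar B(x^*,b_1)$, and a constant $L_1>0$ such that for all $x,y\in\mathcal{M}\cap\bar B(x^*,b_1)$ and every $J(x)\in\partial_BF(x)$: $\|F(y)-F(x)-J(x)(y-x)\|\le L_1\|y-x\|^2$ and $\|F(y)-F(x)-J(x)P(x)(y-x)\|\le L_1\|y-x\|^2$. (A2): there is $b_2>0$ such that for all $x\in\mathcal{M}\cap\bar B(x^*,b_2)$ and all $J(x)\in\partial_BF(x)$, $\|(J(x)P(x)+\mu(x)I)^{-1}\|\le\mu(x)^{-1}$, $\mu(x)=\|F(x)\|$. (A3): there are $b_3>0$, $\gamma>0$ with $\|F(x)\|\ge\gamma\,\mathrm{dist}(x,\tilde X^* )$ for all $x\in\mathcal{M}\cap\bar B(x^*,b_3)$. Set $b=\min\{b_2,b_3,\gamma b_1/(2L_1+2L_2+2\gamma+2L_3L_2^q\gamma),1,\gamma/(L_1+L_2+\gamma+L_3L_2^q\gamma)\}$. *)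

theory Defs
  imports "HOL-Analysis.Analysis"
begin

text \<open>f is C^0 on U iff continuous; f is C^(k+1) on the open set U iff f is
  differentiable on U and, for every direction v, the map x |-> Df(x) v is C^k on U.
  (In finite dimensions this is the usual notion.)\<close>

fun Ck_on :: "nat \<Rightarrow> ('a::euclidean_space) set \<Rightarrow> ('a \<Rightarrow> 'b::euclidean_space) \<Rightarrow> bool" where
  "Ck_on 0 U f = continuous_on U f"
| "Ck_on (Suc k) U f =
     ((\<forall>x\<in>U. f differentiable (at x)) \<and>
      (\<forall>v. Ck_on k U (\<lambda>x. frechet_derivative f (at x) v)))"

definition smooth_on :: "('a::euclidean_space) set \<Rightarrow> ('a \<Rightarrow> 'b::euclidean_space) \<Rightarrow> bool" where
  "smooth_on U f \<longleftrightarrow> (\<forall>k. Ck_on k U f)"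

definition embedded_submanifold :: "(real^'n) set \<Rightarrow> bool" where
  "embedded_submanifold M \<longleftrightarrow>
    (\<forall>p\<in>M. \<exists>U V (\<phi>::real^'n \<Rightarrow> real^'n) \<psi> S.
        open U \<and> p \<in> U \<and> open V \<and> subspace S \<and>
        smooth_on U \<phi> \<and> smooth_on V \<psi> \<and> \<phi> ` U = V \<and>
        (\<forall>x\<in>U. \<psi> (\<phi> x) = x) \<and> (\<forall>y\<in>V. \<phi> (\<psi> y) = y) \<and>
        \<phi> ` (M \<inter> U) = V \<inter> S)"

definition tangent_space :: "(real^'n) set \<Rightarrow> real^'n \<Rightarrow> (real^'n) set" where
  "tangent_space M x = {v. \<exists>(c::real \<Rightarrow> real^'n) e. e > 0 \<and> c 0 = x \<and>
       (\<forall>t. \<bar>t\<bar> < e \<longrightarrow> c t \<in> M) \<and> (c has_vector_derivative v) (at 0)}"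

definition is_orth_proj_matrix :: "(real^'n) set \<Rightarrow> real^'n^'n \<Rightarrow> bool" where
  "is_orth_proj_matrix T A \<longleftrightarrow> (\<forall>v. A *v v \<in> T \<and> (\<forall>w\<in>T. (v - A *v v) \<bullet> w = 0))"

definition tangent_proj :: "(real^'n) set \<Rightarrow> real^'n \<Rightarrow> real^'n^'n" where
  "tangent_proj M x = (THE A. is_orth_proj_matrix (tangent_space M x) A)"

definition jacobian_mat :: "(real^'n \<Rightarrow> real^'m) \<Rightarrow> real^'n \<Rightarrow> real^'n^'m" where
  "jacobian_mat F x = matrix (frechet_derivative F (at x))"

definition B_jacobian :: "(real^'n \<Rightarrow> real^'m) \<Rightarrow> real^'n \<Rightarrow> (real^'n^'m) set" where
  "B_jacobian F x = {J. \<exists>xs::nat \<Rightarrow> real^'n. xs \<longlonglongrightarrow> x \<and>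
       (\<forall>k. F differentiable (at (xs k))) \<and> (\<lambda>k. jacobian_mat F (xs k)) \<longlonglongrightarrow> J}"

definition locally_lipschitz :: "('a::metric_space \<Rightarrow> 'b::metric_space) \<Rightarrow> bool" where
  "locally_lipschitz F \<longleftrightarrow> (\<forall>x. \<exists>e>0. \<exists>L. L-lipschitz_on (ball x e) F)"

end

theory Submission
  imports Defs
begin

text \<open>Let \<open>D\<close> be the distance from \<open>x\<close> to the solution set. Since \<open>F x \<noteq> 0\<close> and \<open>F\<close> is continuous,
  \<open>D > 0\<close>, so there is a solution \<open>z\<close> on \<open>\<M>\<close> with \<open>\<parallel>x - z\<parallel> < 2D\<close> (a nearest one
  need not exist, as the solution set on \<open>\<M>\<close> need not be closed). Writing
  \<open>F x = J P (x - z) + e\<close>, (A1) gives \<open>\<parallel>e\<parallel> \<le> L\<^sub>1 \<parallel>x - z\<parallel>\<^sup>2\<close>, and the identity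
  \<open>(J P + \<mu> I)\<^sup>-\<^sup>1 J P w = w - \<mu> (J P + \<mu> I)\<^sup>-\<^sup>1 w\<close> together with (A2) bounds the step by
  \<open>2 \<parallel>x - z\<parallel> + (\<parallel>e\<parallel> + \<parallel>r\<parallel>) / \<mu>\<close>. Finally (A3) gives \<open>\<mu> \<ge> \<gamma> D\<close>, so
  \<open>\<parallel>e\<parallel> / \<mu> \<le> 4 L\<^sub>1 D / \<gamma>\<close>, and \<open>c\<^sub>1 = 4 + 4 L\<^sub>1 / \<gamma>\<close> works.\<close>

lemma locally_lipschitz_continuous_on:
  fixes F :: "'a::metric_space \<Rightarrow> 'b::metric_space"
  assumes "locally_lipschitz F"
  shows "continuous_on UNIV F"
proof (rule continuous_at_imp_continuous_on, intro ballI)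
  fix x
  obtain e L where "e > 0" "L-lipschitz_on (ball x e) F"
    using assms unfolding locally_lipschitz_def by blast
  then have "continuous_on (ball x e) F"
    by (blast intro: lipschitz_on_continuous_on)
  with \<open>e > 0\<close> show "isCont F x"
    by (meson centre_in_ball continuous_on_eq_continuous_at open_ball)
qed

lemma infdist_pos_not_in_closed_superset:
  assumes "closed T" "S \<subseteq> T" "S \<noteq> {}" "x \<notin> T"
  shows "infdist x S > 0"
proof -
  have "x \<notin> closure S"
    using assms closure_minimal by blast
  then show ?thesis
    using assms(3) in_closure_iff_infdist_zero infdist_nonneg by (metis order_le_less)
qed

lemma infdist_less_imp_dist_less:
  assumes "A \<noteq> {}" "infdist x A < t"
  obtains a where "a \<in> A" "dist x a < t"
  using assms by (metis infdist_notempty bdd_below_image_dist cINF_less_iff)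

lemma matrix_inv_mult_left:
  fixes A :: "'a::semiring_1^'n^'m"
  assumes "invertible A"
  shows "matrix_inv A ** A = mat 1"
  using someI_ex[OF assms[unfolded invertible_def]] unfolding matrix_inv_def by blast

lemma scaleR_mat_1_mult_vector: "((c::real) *\<^sub>R mat 1 :: real^'n^'n) *v v = c *\<^sub>R v"
  by (metis matrix_vector_mul_lid scaleR_matrix_vector_assoc)

lemma regularized_step_norm_le:
  fixes JP :: "real^'n^'n"
  assumes \<mu>_pos: "\<mu> > 0"
    and inv: "invertible (JP + \<mu> *\<^sub>R mat 1)"
    and onorm_inv: "onorm (\<lambda>v. matrix_inv (JP + \<mu> *\<^sub>R mat 1) *v v) \<le> 1 / \<mu>"
    and step: "(JP + \<mu> *\<^sub>R mat 1) *v d = - y + r"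
  shows "norm d \<le> 2 * norm w + norm (y - JP *v w) / \<mu> + norm r / \<mu>"
proof -
  define A where "A = JP + \<mu> *\<^sub>R mat 1"
  define B where "B = matrix_inv A"
  define e where "e = y - JP *v w"
  have B_le: "norm (B *v v) \<le> norm v / \<mu>" for v
  proof -
    have "norm (B *v v) \<le> onorm ((*v) B) * norm v"
      by (rule onorm) simp
    also have "\<dots> \<le> norm v / \<mu>"
      using mult_right_mono[OF onorm_inv norm_ge_zero] by (simp add: A_def B_def)
    finally show ?thesis .
  qed
  have BA: "B *v (A *v v) = v" for v
    using matrix_inv_mult_left[OF inv] by (simp add: A_def B_def matrix_vector_mul_assoc)
  have y_eq: "y = A *v w - \<mu> *\<^sub>R w + e"
    by (simp add: A_def e_def matrix_vector_mult_add_rdistrib scaleR_mat_1_mult_vector)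
  have "d = B *v (- y + r)"
    using BA[of d] step by (simp add: A_def)
  also have "\<dots> = \<mu> *\<^sub>R (B *v w) - w - B *v e + B *v r"
    unfolding y_eq
    by (simp add: BA algebra_simps)
  finally have d_eq: "d = \<mu> *\<^sub>R (B *v w) - w - B *v e + B *v r" .
  have "\<mu> * norm (B *v w) \<le> \<mu> * (norm w / \<mu>)"
    using B_le[of w] \<mu>_pos by (intro mult_left_mono) auto
  then have "norm (\<mu> *\<^sub>R (B *v w)) \<le> norm w"
    using \<mu>_pos by simp
  then show ?thesis
    unfolding d_eq e_def[symmetric]
    using norm_triangle_ineq[of "\<mu> *\<^sub>R (B *v w) - w - B *v e" "B *v r"]
      norm_triangle_ineq4[of "\<mu> *\<^sub>R (B *v w) - w" "B *v e"]
      norm_triangle_ineq4[of "\<mu> *\<^sub>R (B *v w)" w] B_le[of e] B_le[of r]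
    by linarith
qed

lemma linear_plus_quadratic_div_le:
  fixes t D \<mu> \<gamma> L :: real
  assumes "0 \<le> t" "t \<le> 2 * D" "0 < \<gamma>" "\<gamma> * D \<le> \<mu>" "0 < D" "0 \<le> L"
  shows "2 * t + L * t\<^sup>2 / \<mu> \<le> (4 + 4 * L / \<gamma>) * D"
proof -
  have "L * t\<^sup>2 / \<mu> \<le> L * (2 * D)\<^sup>2 / (\<gamma> * D)"
    using assms by (intro frac_le mult_left_mono power_mono) auto
  also have "\<dots> = 4 * L / \<gamma> * D"
    using assms by (simp add: field_simps power2_eq_square)
  finally show ?thesis
    using assms by (simp add: algebra_simps)
qed

lemma regularized_step_norm_le_infdist:
  fixes F :: "real^'n \<Rightarrow> real^'n" and x :: "real^'n" and JP :: "real^'n^'n"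
  defines "\<mu> \<equiv> norm (F x)"
  assumes zeros_closed: "closed {z. F z = 0}"
    and S: "S \<subseteq> {z. F z = 0}" "S \<noteq> {}"
    and Fx: "F x \<noteq> 0"
    and lin: "\<And>z. z \<in> S \<Longrightarrow> dist x z < 2 * infdist x S \<Longrightarrow>
               norm (F z - F x - JP *v (z - x)) \<le> L * (norm (z - x))\<^sup>2"
    and L_nonneg: "0 \<le> L"
    and error_bound: "\<gamma> * infdist x S \<le> \<mu>" "0 < \<gamma>"
    and inv: "invertible (JP + \<mu> *\<^sub>R mat 1)"
    and onorm_inv: "onorm (\<lambda>v. matrix_inv (JP + \<mu> *\<^sub>R mat 1) *v v) \<le> 1 / \<mu>"
    and step: "(JP + \<mu> *\<^sub>R mat 1) *v d = - F x + r"
  shows "norm d \<le> (4 + 4 * L / \<gamma>) * infdist x S + norm r / \<mu>"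
proof -
  define D where "D = infdist x S"
  have "0 < D"
    unfolding D_def using zeros_closed S
  proof (rule infdist_pos_not_in_closed_superset)
    show "x \<notin> {z. F z = 0}"
      using Fx by simp
  qed
  then obtain z where "z \<in> S" and xz: "dist x z < 2 * D"
    using infdist_less_imp_dist_less[OF S(2), of x "2 * D"] by (auto simp: D_def)
  have "F x - JP *v (x - z) = - (F z - F x - JP *v (z - x))"
    using \<open>z \<in> S\<close> S(1) by (auto simp: matrix_vector_mult_diff_distrib)
  then have "norm (F x - JP *v (x - z)) = norm (F z - F x - JP *v (z - x))"
    by (metis norm_minus_cancel)
  also have "\<dots> \<le> L * (norm (z - x))\<^sup>2"
    using lin \<open>z \<in> S\<close> xz by (simp add: D_def)
  finally have "norm (F x - JP *v (x - z)) \<le> L * (norm (x - z))\<^sup>2"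
    by (simp add: norm_minus_commute)
  moreover have "\<mu> > 0"
    using Fx by (simp add: \<mu>_def)
  ultimately have "norm (F x - JP *v (x - z)) / \<mu> \<le> L * (norm (x - z))\<^sup>2 / \<mu>"
    by (simp add: divide_right_mono)
  then have "norm d \<le> 2 * norm (x - z) + L * (norm (x - z))\<^sup>2 / \<mu> + norm r / \<mu>"
    using regularized_step_norm_le[OF \<open>\<mu> > 0\<close> inv onorm_inv step, of "x - z"] by linarith
  also have "\<dots> \<le> (4 + 4 * L / \<gamma>) * D + norm r / \<mu>"
    using linear_plus_quadratic_div_le[of "norm (x - z)" D \<gamma> \<mu> L]
      xz L_nonneg error_bound \<open>0 < D\<close>
    by (simp add: D_def dist_norm)
  finally show ?thesis
    by (simp add: D_def)
qed

theorem lemma5p2: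
  fixes F :: "real^'n \<Rightarrow> real^'n"
    and M :: "(real^'n) set"
    and xs :: "real^'n"
    and b1 b2 b3 L1 L2 L3 \<gamma> q b :: real
  assumes F_loc_lip: "locally_lipschitz F"
    and xs_sol: "F xs = 0"
    and M_sub: "embedded_submanifold M"
    and xs_M: "xs \<in> M"
    \<comment> \<open>(A1)\<close>
    and A1_pos: "b1 > 0" "L1 > 0" "L2 > 0"
    and A1_lip: "L2-lipschitz_on (cball xs b1) F"
    and A1_J: "\<And>x y J. x \<in> M \<inter> cball xs b1 \<Longrightarrow> y \<in> M \<inter> cball xs b1 \<Longrightarrow> J \<in> B_jacobian F x \<Longrightarrow>
                 norm (F y - F x - J *v (y - x)) \<le> L1 * (norm (y - x))\<^sup>2"
    and A1_JP: "\<And>x y J. x \<in> M \<inter> cball xs b1 \<Longrightarrow> y \<in> M \<inter> cball xs b1 \<Longrightarrow> J \<in> B_jacobian F x \<Longrightarrow>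
                 norm (F y - F x - (J ** tangent_proj M x) *v (y - x)) \<le> L1 * (norm (y - x))\<^sup>2"
    \<comment> \<open>(A2), required where \<mu>(x) = norm (F x) > 0\<close>
    and A2_pos: "b2 > 0"
    and A2: "\<And>x J. x \<in> M \<inter> cball xs b2 \<Longrightarrow> F x \<noteq> 0 \<Longrightarrow> J \<in> B_jacobian F x \<Longrightarrow>
               invertible (J ** tangent_proj M x + norm (F x) *\<^sub>R mat 1) \<and>
               onorm (\<lambda>v. matrix_inv (J ** tangent_proj M x + norm (F x) *\<^sub>R mat 1) *v v)
                 \<le> 1 / norm (F x)"
    \<comment> \<open>(A3)\<close>
    and A3_pos: "b3 > 0" "\<gamma> > 0"
    and A3: "\<And>x. x \<in> M \<inter> cball xs b3 \<Longrightarrow>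
               norm (F x) \<ge> \<gamma> * infdist x ({z. F z = 0} \<inter> M)"
    and q: "1 < q" "q \<le> 2"
    and L3: "L3 > 0"
    and b_def: "b = Min {b2, b3,
                  \<gamma> * b1 / (2*L1 + 2*L2 + 2*\<gamma> + 2*L3 * L2 powr q * \<gamma>), 1,
                  \<gamma> / (L1 + L2 + \<gamma> + L3 * L2 powr q * \<gamma>)}"
  shows "\<exists>c1>0. \<forall>x J d r.
           x \<in> M \<inter> cball xs (b/2) \<longrightarrow> F x \<noteq> 0 \<longrightarrow> J \<in> B_jacobian F x \<longrightarrow>
           (J ** tangent_proj M x + norm (F x) *\<^sub>R mat 1) *v d = - F x + r \<longrightarrow>
           norm r / norm (F x) \<le> L3 * norm (F x) powr q \<longrightarrow>
           norm d \<le> c1 * infdist x ({z. F z = 0} \<inter> M) + norm r / norm (F x)"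
proof -
  define S where "S = {z. F z = 0} \<inter> M"
  define K where "K = L1 + L2 + \<gamma> + L3 * L2 powr q * \<gamma>"
  have "\<gamma> < K"
    unfolding K_def using A1_pos A3_pos L3 by (simp add: add_pos_pos)
  have "b = Min {b2, b3, \<gamma> * b1 / (2 * K), 1, \<gamma> / K}"
    unfolding b_def K_def by (simp add: algebra_simps)
  then have b: "0 < b" "b \<le> b2" "b \<le> b3" "b \<le> \<gamma> * b1 / (2 * K)"
    using A1_pos A2_pos A3_pos \<open>\<gamma> < K\<close> by auto
  note b(4)
  also have "\<gamma> * b1 / (2 * K) \<le> b1 / 2"
    using \<open>\<gamma> < K\<close> A1_pos A3_pos by (simp add: field_simps)
  finally have "b \<le> b1 / 2" .
  have "xs \<in> S" "S \<noteq> {}"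
    using xs_sol xs_M by (auto simp: S_def)
  have zeros_closed: "closed {z. F z = 0}"
    using locally_lipschitz_continuous_on[OF F_loc_lip]
    by (simp add: closed_Collect_eq continuous_on_const)
  show ?thesis
  proof (intro exI[of _ "4 + 4 * L1 / \<gamma>"] conjI allI impI)
    show "4 + 4 * L1 / \<gamma> > 0"
      using A1_pos A3_pos by (simp add: add_pos_pos)
  next
    fix x J d r
    assume x: "x \<in> M \<inter> cball xs (b/2)" and Fx: "F x \<noteq> 0" and J: "J \<in> B_jacobian F x"
      and step: "(J ** tangent_proj M x + norm (F x) *\<^sub>R mat 1) *v d = - F x + r"
    have x_in: "x \<in> M \<inter> cball xs b1" "x \<in> M \<inter> cball xs b2" "x \<in> M \<inter> cball xs b3"
      using x b \<open>b \<le> b1 / 2\<close> by auto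
    have "norm d \<le> (4 + 4 * L1 / \<gamma>) * infdist x S + norm r / norm (F x)"
    proof (rule regularized_step_norm_le_infdist[OF zeros_closed _ \<open>S \<noteq> {}\<close> Fx _ _ _ _ _ _ step])
      fix z
      assume z: "z \<in> S" "dist x z < 2 * infdist x S"
      have "infdist x S \<le> dist x xs"
        using \<open>xs \<in> S\<close> by (rule infdist_le)
      moreover have "dist xs z \<le> dist xs x + dist x z"
        by (rule dist_triangle)
      ultimately have "z \<in> M \<inter> cball xs b1"
        using z x \<open>b \<le> b1 / 2\<close> A1_pos by (simp add: S_def dist_commute)
      then show "norm (F z - F x - (J ** tangent_proj M x) *v (z - x)) \<le> L1 * (norm (z - x))\<^sup>2"
        by (rule A1_JP[OF x_in(1) _ J])
    next
      show "\<gamma> * infdist x S \<le> norm (F x)"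
        using A3[OF x_in(3)] by (simp add: S_def)
    qed (use A1_pos A3_pos A2[OF x_in(2) Fx J] in \<open>auto simp: S_def\<close>)
    then show "norm d \<le> (4 + 4 * L1 / \<gamma>) * infdist x ({z. F z = 0} \<inter> M) + norm r / norm (F x)"
      by (simp add: S_def)
  qed
qed

end
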